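(* Consider the state space model and the extended alive particle filter (APF) described in the context, with $N\ge 1$. For every $t\in\{1,\dots,T\}$, $$\mathbb{E}\left[\frac{\sum_{n=1}^N w_t^{(n)}}{P_t - 1}\,\middle|\, \mathcal{F}_{t-1}\right] = \sum_{n=1}^N \frac{w_{t-1}^{(n)}}{\sum_{m=1}^N w_{t-1}^{(m)}}\, p\!\left(y_t \,\middle|\, x_{t-1}^{(n)}\right),$$ where $p(y_t\mid x_{t-1}) = \int f_t(x_t\mid x_{t-1})\, g_t(y_t\mid x_t)\,dx_t$.
   Context: State space model: $x_0\sim p(x_0)$; for $t=1,\dots,T$, $x_t \sim f_t(x_t\mid x_{t-1})$ and $y_t\sim g_t(y_t\mid x_t)$; the observations $y_1,\dots,y_T$ are fixed. For $s\ge t$, $p(y_{t:s}\mid x_{t-1})$ denotes the conditional density of $y_t,\dots,y_s$ given $x_{t-1}$ under this model (with $p(y_{t+1:t}\mid x_t):=1$). Extended alive particle filter with $N$ particles: initially draw $x_0^{(1)},\dots,x_0^{(N)}$ independently from $p(x_0)$ and set $w_0^{(n)}=1$. For each $t=1,\dots,T$: set $P_t\gets 0$; for each $n=1,\dots,N+1$, repeat the following until the weight is positive: draw an index $a$ from the categorical distribution with probabilities $w_{t-1}^{(m)}/\sum_{l=1}^N w_{t-1}^{(l)}$, $m=1,\dots,N$; draw $x_t^{(n)}\sim f_t(\cdot\mid x_{t-1}^{(a)})$; increment $P_t$ by one; set $w_t^{(n)} = g_t(y_t\mid x_t^{(n)})$. Thus $P_t$ is the total number of propagations (including those for the $(N+1)$-th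 particle) at time $t$; the $(N+1)$-th particle's state and weight are otherwise never used. $\mathcal{F}_t=\{x_t^{(n)},w_t^{(n)}\}_{n=1}^N$ denotes the states and weights of the first $N$ particles at time $t$. *)

theory Defs
  imports "HOL-Probability.Probability"
begin

text \<open>One time step t of the extended alive particle filter, given
  F_{t-1} = (xs, w) (states and weights of the N particles at time t-1, indices 0..N-1).
  The transition density f_t(x'|x) is  f x x'  w.r.t. a reference measure mu on the state space,
  the observation density with y_t fixed is  g x' = g_t(y_t | x').
  Each propagation draws an ancestor index a with probability w a / sum w, then
  x' ~ f(. | xs a); the draw is recorded as the pair (a, x').\<close>

definition apf_draw ::
  "'a measure \<Rightarrow> nat \<Rightarrow> (nat \<Rightarrow> 'a) \<Rightarrow> (nat \<Rightarrow> real) \<Rightarrow> ('a \<Rightarrow> 'a \<Rightarrow> real) \<Rightarrow> (nat \<times> 'a) measure"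
  where
  "apf_draw \<mu> N xs w f =
     density (count_space UNIV \<Otimes>\<^sub>M \<mu>)
       (\<lambda>(a, x'). ennreal (if a < N then w a / (\<Sum>m<N. w m) * f (xs a) x' else 0))"

text \<open>All propagations at time t form an i.i.d. sequence of draws (the repeat-until loops
  simply consume fresh draws). omega i is the i-th propagation (0-based).\<close>

definition apf_space ::
  "'a measure \<Rightarrow> nat \<Rightarrow> (nat \<Rightarrow> 'a) \<Rightarrow> (nat \<Rightarrow> real) \<Rightarrow> ('a \<Rightarrow> 'a \<Rightarrow> real) \<Rightarrow> (nat \<Rightarrow> nat \<times> 'a) measure"
  where
  "apf_space \<mu> N xs w f = PiM UNIV (\<lambda>_::nat. apf_draw \<mu> N xs w f)"

text \<open>Index of the propagation that produced particle n+1 (the (n+1)-th positive-weight draw).\<close>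
definition apf_pos :: "('a \<Rightarrow> real) \<Rightarrow> (nat \<Rightarrow> nat \<times> 'a) \<Rightarrow> nat \<Rightarrow> nat" where
  "apf_pos g \<omega> n = enumerate {i. 0 < g (snd (\<omega> i))} n"

text \<open>P_t: total number of propagations, including those for the (N+1)-th particle.\<close>
definition apf_P :: "('a \<Rightarrow> real) \<Rightarrow> nat \<Rightarrow> (nat \<Rightarrow> nat \<times> 'a) \<Rightarrow> nat" where
  "apf_P g N \<omega> = Suc (apf_pos g \<omega> N)"

definition apf_weight :: "('a \<Rightarrow> real) \<Rightarrow> (nat \<Rightarrow> nat \<times> 'a) \<Rightarrow> nat \<Rightarrow> real" where
  "apf_weight g \<omega> n = g (snd (\<omega> (apf_pos g \<omega> n)))"

end

theory Submission
  imports Defs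
begin

text \<open>Let \<open>\<tau>\<close> be the (0-based) index of the
  draw producing the (N+1)-th positive weight, so that \<open>P\<^sub>t - 1 = \<tau>\<close>, and the ratio is the average
  of \<open>g\<close> over the first \<open>\<tau>\<close> draws, the zero-weight draws contributing nothing. Swapping draw \<open>i < k\<close>
  with draw 0 does not change the event \<open>\<tau> = k\<close>, so on this event every draw before \<open>k\<close> has the same
  expected weight as draw 0; averaging over \<open>i < k\<close> and summing over \<open>k\<close> leaves the expected
  weight of a single draw, which is the right-hand side. Two facts make this work: \<open>N \<ge> 1\<close>
  forces \<open>\<tau> \<ge> 1\<close>, and a positive right-hand side makes a positive weight an event of positive
  probability, so that \<open>\<tau>\<close> is almost surely finite.\<close>

lemma enumerate_image_lessThan:
  fixes S :: "nat set"
  assumes "infinite S"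
  shows "enumerate S ` {..<n} = {i \<in> S. i < enumerate S n}"
  using assms by (auto dest: enumerate_Ex[OF assms] intro: enumerate_in_set)

lemma card_less_enumerate:
  fixes S :: "nat set"
  assumes "infinite S"
  shows "card {i \<in> S. i < enumerate S n} = n"
  using inj_enumerate[OF assms]
  by (simp add: enumerate_image_lessThan[OF assms, symmetric] card_image inj_on_subset)

lemma enumerate_eq_iff:
  fixes S :: "nat set"
  assumes "infinite S"
  shows "enumerate S n = k \<longleftrightarrow> k \<in> S \<and> card {i \<in> S. i < k} = n"
proof
  assume k: "k \<in> S \<and> card {i \<in> S. i < k} = n"
  then obtain m where "enumerate S m = k" using enumerate_Ex[OF assms] by blast
  with k show "enumerate S n = k" using card_less_enumerate[OF assms, of m] by simp
qed (use assms enumerate_in_set card_less_enumerate in auto)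

lemma sum_enumerate:
  fixes S :: "nat set"
  assumes "infinite S" "\<And>i. i \<notin> S \<Longrightarrow> G i = 0"
  shows "(\<Sum>n<N. G (enumerate S n)) = (\<Sum>i<enumerate S N. G i)"
proof -
  have "(\<Sum>n<N. G (enumerate S n)) = (\<Sum>i\<in>{i \<in> S. i < enumerate S N}. G i)"
    using inj_enumerate[OF assms(1)]
    by (simp add: enumerate_image_lessThan[OF assms(1), symmetric] sum.reindex inj_on_subset)
  also have "\<dots> = (\<Sum>i<enumerate S N. G i)"
    using assms(2) by (intro sum.mono_neutral_left) auto
  finally show ?thesis .
qed

lemma enumerate_permutes_eq_iff:
  fixes S :: "nat set"
  assumes "infinite S" "\<sigma> permutes {..<k}"
  shows "enumerate (\<sigma> -` S) n = k \<longleftrightarrow> enumerate S n = k"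
proof -
  have "infinite (\<sigma> -` S)"
    using assms finite_vimageD permutes_surj by blast
  moreover have "\<sigma> k = k" using assms(2) by (simp add: permutes_not_in)
  moreover have "card {i \<in> \<sigma> -` S. i < k} = card {i \<in> S. i < k}"
  proof -
    have "{i \<in> \<sigma> -` S. i < k} = \<sigma> -` {i \<in> S. i < k}"
      using permutes_in_image[OF assms(2)] by auto
    also have "card \<dots> = card {i \<in> S. i < k}"
      using assms(2) by (intro card_vimage_inj) (auto dest: permutes_inj permutes_surj)
    finally show ?thesis .
  qed
  ultimately show ?thesis using assms(1) by (simp add: enumerate_eq_iff)
qed

lemma measurable_enumerate_nat[measurable]:
  fixes P :: "nat \<Rightarrow> 'a \<Rightarrow> bool"
  assumes "\<And>i. Measurable.pred M (P i)"
  shows "(\<lambda>x. enumerate {i. P i x} n) \<in> measurable M (count_space UNIV)"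
  using assms
proof (induction n arbitrary: P)
  case 0
  then have "(\<lambda>x. LEAST i. P i x) \<in> measurable M (count_space UNIV)" by measurable
  then show ?case unfolding enumerate_0 mem_Collect_eq .
next
  case (Suc n)
  note [measurable] = Suc.prems
  have "(\<lambda>x. enumerate {i. P i x \<and> i \<noteq> (LEAST j. P j x)} n) \<in> measurable M (count_space UNIV)"
    by (intro Suc.IH) measurable
  moreover have "{i. P i x} - {LEAST i. P i x} = {i. P i x \<and> i \<noteq> (LEAST j. P j x)}" for x
    by auto
  ultimately show ?case by (simp only: enumerate_Suc mem_Collect_eq)
qed

lemma emeasure_Collect_pos_neq_0:
  fixes h :: "'a \<Rightarrow> real"
  assumes [measurable]: "h \<in> borel_measurable M" and "(\<integral>\<^sup>+x. ennreal (h x) \<partial>M) \<noteq> 0"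
  shows "emeasure M {x \<in> space M. 0 < h x} \<noteq> 0"
proof
  assume null: "emeasure M {x \<in> space M. 0 < h x} = 0"
  have "AE x in M. ennreal (h x) = 0"
    by (intro AE_I[OF _ null]) (auto simp: ennreal_eq_0_iff)
  then show False
    using assms(2) by (simp add: nn_integral_cong_AE)
qed

context prob_space
begin

lemma distr_PiM_comp_inj:
  assumes "inj \<sigma>"
  shows "distr (PiM UNIV (\<lambda>_::'i. M)) (PiM UNIV (\<lambda>_. M)) (\<lambda>\<omega>. \<omega> \<circ> \<sigma>) = PiM UNIV (\<lambda>_. M)"
  using distr_PiM_reindex[of UNIV "\<lambda>_. M" \<sigma> UNIV] prob_space_axioms assms
  by (simp add: restrict_UNIV comp_def)

lemma AE_PiM_infinitely_often:
  assumes [measurable]: "Measurable.pred M P" and "emeasure M {x \<in> space M. P x} \<noteq> 0"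
  shows "AE \<omega> in PiM UNIV (\<lambda>_::nat. M). infinite {j. P (\<omega> j)}"
proof -
  interpret iid: product_prob_space "\<lambda>_::nat. M" UNIV ..
  define q where "q = prob (space M - {x \<in> space M. P x})"
  have "0 \<le> q" "q < 1"
    using assms prob_compl[of "{x \<in> space M. P x}"]
    by (auto simp: q_def emeasure_eq_measure zero_less_measure_iff)
  have null: "emeasure (PiM UNIV (\<lambda>_::nat. M)) {\<omega> \<in> space (PiM UNIV (\<lambda>_. M)). \<forall>j\<ge>m. \<not> P (\<omega> j)} = 0"
    (is "emeasure ?\<Omega> ?B = 0") for m
  proof -
    have "iid.prob ?B \<le> q ^ L" for L
    proof -
      let ?C = "{\<omega> \<in> space ?\<Omega>. \<forall>j\<in>{m..<m+L}. \<omega> j \<in> space M - {x \<in> space M. P x}}"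
      have "?B \<subseteq> ?C"
        by (auto simp: space_PiM)
      then have "iid.prob ?B \<le> iid.prob ?C"
        by (intro iid.finite_measure_mono) measurable
      also have "\<dots> = q ^ L"
        using iid.emeasure_PiM_Collect[of "{m..<m+L}" "\<lambda>_. space M - {x \<in> space M. P x}"] \<open>0 \<le> q\<close>
        by (simp add: iid.emeasure_eq_measure emeasure_eq_measure q_def prod_ennreal ennreal_power)
      finally show ?thesis .
    qed
    then have "iid.prob ?B \<le> 0"
      using \<open>0 \<le> q\<close> \<open>q < 1\<close> by (intro LIMSEQ_le_const[OF LIMSEQ_power_zero[of q]]) auto
    then show ?thesis by (simp add: iid.emeasure_eq_measure measure_le_0_iff)
  qed
  have "AE \<omega> in ?\<Omega>. \<exists>j\<ge>m. P (\<omega> j)" for m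
    by (intro AE_I[OF _ null[of m]]) auto
  then have "AE \<omega> in ?\<Omega>. \<forall>m. \<exists>j\<ge>m. P (\<omega> j)"
    by (simp add: AE_all_countable)
  then show ?thesis by eventually_elim (simp add: infinite_nat_iff_unbounded_le)
qed

lemma nn_integral_visit_exchange:
  fixes P :: "'a \<Rightarrow> bool" and h :: "'a \<Rightarrow> ennreal" and i k :: nat
  assumes [measurable]: "Measurable.pred M P" "h \<in> borel_measurable M"
    and "emeasure M {x \<in> space M. P x} \<noteq> 0" and "i < k"
  shows "(\<integral>\<^sup>+\<omega>. (if enumerate {j. P (\<omega> j)} n = k then h (\<omega> i) else 0) \<partial>PiM UNIV (\<lambda>_. M))
       = (\<integral>\<^sup>+\<omega>. (if enumerate {j. P (\<omega> j)} n = k then h (\<omega> 0) else 0) \<partial>PiM UNIV (\<lambda>_. M))"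
proof -
  let ?\<Omega> = "PiM UNIV (\<lambda>_::nat. M)"
  let ?F = "\<lambda>\<omega>. if enumerate {j. P (\<omega> j)} n = k then h (\<omega> 0) else 0"
  define \<sigma> where "\<sigma> = Transposition.transpose 0 i"
  have \<sigma>: "\<sigma> permutes {..<k}"
    unfolding \<sigma>_def using assms(4) by (intro permutes_swap_id) auto
  have "AE \<omega> in ?\<Omega>. ?F (\<omega> \<circ> \<sigma>) = (if enumerate {j. P (\<omega> j)} n = k then h (\<omega> i) else 0)"
    using AE_PiM_infinitely_often[OF assms(1,3)]
  proof eventually_elim
    case (elim \<omega>)
    moreover have "{j. P ((\<omega> \<circ> \<sigma>) j)} = \<sigma> -` {j. P (\<omega> j)}" by auto
    ultimately have "enumerate {j. P ((\<omega> \<circ> \<sigma>) j)} n = k \<longleftrightarrow> enumerate {j. P (\<omega> j)} n = k"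
      using enumerate_permutes_eq_iff[OF _ \<sigma>] by metis
    moreover have "\<sigma> 0 = i" by (simp add: \<sigma>_def)
    ultimately show ?case by simp
  qed
  have "(\<integral>\<^sup>+\<omega>. ?F \<omega> \<partial>?\<Omega>) = (\<integral>\<^sup>+\<omega>. ?F \<omega> \<partial>distr ?\<Omega> ?\<Omega> (\<lambda>\<omega>. \<omega> \<circ> \<sigma>))"
    using permutes_inj[OF \<sigma>] by (simp add: distr_PiM_comp_inj)
  also have "\<dots> = (\<integral>\<^sup>+\<omega>. ?F (\<omega> \<circ> \<sigma>) \<partial>?\<Omega>)"
    by (intro nn_integral_distr measurable_PiM_single') (auto simp: space_PiM)
  also have "\<dots> = (\<integral>\<^sup>+\<omega>. (if enumerate {j. P (\<omega> j)} n = k then h (\<omega> i) else 0) \<partial>?\<Omega>)"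
    by (rule nn_integral_cong_AE) fact
  finally show ?thesis ..
qed

lemma nn_integral_visit_average:
  fixes P :: "'a \<Rightarrow> bool" and h :: "'a \<Rightarrow> ennreal" and N k :: nat
  assumes [measurable]: "Measurable.pred M P" "h \<in> borel_measurable M"
    and visits: "emeasure M {x \<in> space M. P x} \<noteq> 0" and "0 < N"
  shows "(\<integral>\<^sup>+\<omega>. (if enumerate {j. P (\<omega> j)} N = k then (\<Sum>i<k. h (\<omega> i)) / of_nat k else 0)
            \<partial>PiM UNIV (\<lambda>_. M))
       = (\<integral>\<^sup>+\<omega>. (if enumerate {j. P (\<omega> j)} N = k then h (\<omega> 0) else 0) \<partial>PiM UNIV (\<lambda>_. M))"
proof (cases "k = 0")
  case True
  have "AE \<omega> in PiM UNIV (\<lambda>_::nat. M). enumerate {j. P (\<omega> j)} N \<noteq> 0"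
    using AE_PiM_infinitely_often[OF assms(1) visits]
  proof eventually_elim
    case (elim \<omega>)
    then show ?case
      using le_enumerate[of "{j. P (\<omega> j)}" N] \<open>0 < N\<close> by simp
  qed
  with True show ?thesis
    by (intro nn_integral_cong_AE) auto
next
  case False
  let ?\<Omega> = "PiM UNIV (\<lambda>_::nat. M)" and ?E = "\<lambda>\<omega>. enumerate {j. P (\<omega> j)} N = k"
  have "(\<integral>\<^sup>+\<omega>. (if ?E \<omega> then (\<Sum>i<k. h (\<omega> i)) / of_nat k else 0) \<partial>?\<Omega>)
      = (\<integral>\<^sup>+\<omega>. (\<Sum>i<k. if ?E \<omega> then h (\<omega> i) else 0) / of_nat k \<partial>?\<Omega>)"
    by (intro nn_integral_cong) simp
  also have "\<dots> = (\<Sum>i<k. \<integral>\<^sup>+\<omega>. (if ?E \<omega> then h (\<omega> i) else 0) \<partial>?\<Omega>) / of_nat k"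
    by (simp add: nn_integral_divide nn_integral_sum)
  also have "\<dots> = (\<Sum>i<k. \<integral>\<^sup>+\<omega>. (if ?E \<omega> then h (\<omega> 0) else 0) \<partial>?\<Omega>) / of_nat k"
    by (subst sum.cong[OF refl nn_integral_visit_exchange[OF assms(1,2) visits]]) auto
  also have "\<dots> = (\<integral>\<^sup>+\<omega>. (if ?E \<omega> then h (\<omega> 0) else 0) \<partial>?\<Omega>)"
    using False by (simp add: mult.commute[of "of_nat k :: ennreal"] ennreal_mult_divide_eq)
  finally show ?thesis .
qed

lemma nn_integral_mean_before_visit:
  fixes P :: "'a \<Rightarrow> bool" and h :: "'a \<Rightarrow> ennreal" and N :: nat
  assumes [measurable]: "Measurable.pred M P" "h \<in> borel_measurable M"
    and visits: "emeasure M {x \<in> space M. P x} \<noteq> 0" and "0 < N"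
  shows "(\<integral>\<^sup>+\<omega>. (\<Sum>i<enumerate {j. P (\<omega> j)} N. h (\<omega> i)) / of_nat (enumerate {j. P (\<omega> j)} N)
            \<partial>PiM UNIV (\<lambda>_. M)) = integral\<^sup>N M h"
proof -
  interpret iid: product_prob_space "\<lambda>_::nat. M" UNIV ..
  let ?\<Omega> = "PiM UNIV (\<lambda>_::nat. M)"
  define \<tau> where "\<tau> \<omega> = enumerate {j. P (\<omega> j)} N" for \<omega> :: "nat \<Rightarrow> 'a"
  have [measurable]: "\<tau> \<in> measurable ?\<Omega> (count_space UNIV)"
    unfolding \<tau>_def by measurable
  have single: "(\<Sum>k. if \<tau> \<omega> = k then F k else 0) = F (\<tau> \<omega>)" for \<omega> and F :: "nat \<Rightarrow> ennreal"
    using sums_single[of "\<tau> \<omega>" F] by (simp add: sums_iff eq_commute)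
  have "(\<integral>\<^sup>+\<omega>. (\<Sum>i<\<tau> \<omega>. h (\<omega> i)) / of_nat (\<tau> \<omega>) \<partial>?\<Omega>)
      = (\<integral>\<^sup>+\<omega>. (\<Sum>k. if \<tau> \<omega> = k then (\<Sum>i<k. h (\<omega> i)) / of_nat k else 0) \<partial>?\<Omega>)"
    by (simp only: single)
  also have "\<dots> = (\<Sum>k. \<integral>\<^sup>+\<omega>. (if \<tau> \<omega> = k then (\<Sum>i<k. h (\<omega> i)) / of_nat k else 0) \<partial>?\<Omega>)"
    by (intro nn_integral_suminf) measurable
  also have "\<dots> = (\<Sum>k. \<integral>\<^sup>+\<omega>. (if \<tau> \<omega> = k then h (\<omega> 0) else 0) \<partial>?\<Omega>)"
    unfolding \<tau>_def using nn_integral_visit_average[OF assms] by simp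
  also have "\<dots> = (\<integral>\<^sup>+\<omega>. (\<Sum>k. if \<tau> \<omega> = k then h (\<omega> 0) else 0) \<partial>?\<Omega>)"
    by (intro nn_integral_suminf[symmetric]) measurable
  also have "\<dots> = (\<integral>\<^sup>+\<omega>. h (\<omega> 0) \<partial>?\<Omega>)"
    by (simp only: single)
  also have "\<dots> = integral\<^sup>N M h"
    using nn_integral_distr[of "\<lambda>\<omega>. \<omega> 0" ?\<Omega> M h] by (simp add: iid.PiM_component)
  finally show ?thesis by (simp add: \<tau>_def)
qed

end

lemma sets_apf_draw[measurable_cong]:
  "sets (apf_draw \<mu> N xs w f) = sets (count_space UNIV \<Otimes>\<^sub>M \<mu>)"
  by (simp add: apf_draw_def)

lemma space_apf_draw:
  "space (apf_draw \<mu> N xs w f) = UNIV \<times> space \<mu>"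
  by (simp add: apf_draw_def space_pair_measure)

context
  fixes \<mu> :: "'a measure" and N :: nat and xs :: "nat \<Rightarrow> 'a" and w :: "nat \<Rightarrow> real"
    and f :: "'a \<Rightarrow> 'a \<Rightarrow> real"
  assumes sigma_finite: "sigma_finite_measure \<mu>"
    and xs_space: "\<And>n. n < N \<Longrightarrow> xs n \<in> space \<mu>"
    and w_nonneg: "\<And>n. n < N \<Longrightarrow> 0 \<le> w n"
    and w_sum_pos: "0 < (\<Sum>m<N. w m)"
    and f_measurable: "\<And>x. x \<in> space \<mu> \<Longrightarrow> f x \<in> borel_measurable \<mu>"
begin

lemma nn_integral_apf_draw:
  assumes h: "h \<in> borel_measurable (count_space UNIV \<Otimes>\<^sub>M \<mu>)"
  shows "integral\<^sup>N (apf_draw \<mu> N xs w f) h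
    = (\<Sum>a<N. ennreal (w a / (\<Sum>m<N. w m)) * (\<integral>\<^sup>+x'. ennreal (f (xs a) x') * h (a, x') \<partial>\<mu>))"
proof -
  interpret \<mu>: sigma_finite_measure \<mu> by (rule sigma_finite)
  define W where "W = (\<Sum>m<N. w m)"
  define d where "d = (\<lambda>(a, x'). ennreal (if a < N then w a / W * f (xs a) x' else 0))"
  have d_measurable: "d \<in> borel_measurable (count_space UNIV \<Otimes>\<^sub>M \<mu>)"
    unfolding d_def
  proof (rule measurable_pair_measure_countable1)
    show "(\<lambda>x'. case (a, x') of (a, x') \<Rightarrow> ennreal (if a < N then w a / W * f (xs a) x' else 0))
      \<in> borel_measurable \<mu>" for a
      using f_measurable[OF xs_space, of a] by (cases "a < N") auto
  qed simp
  have "integral\<^sup>N (apf_draw \<mu> N xs w f) h = (\<integral>\<^sup>+z. d z * h z \<partial>(count_space UNIV \<Otimes>\<^sub>M \<mu>))"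
    unfolding apf_draw_def W_def[symmetric] d_def[symmetric] by (rule nn_integral_density[OF d_measurable h])
  also have "\<dots> = (\<integral>\<^sup>+a. \<integral>\<^sup>+x'. d (a, x') * h (a, x') \<partial>\<mu> \<partial>count_space UNIV)"
    by (rule \<mu>.nn_integral_fst[symmetric]) (use d_measurable h in measurable)
  also have "\<dots> = (\<Sum>a<N. \<integral>\<^sup>+x'. d (a, x') * h (a, x') \<partial>\<mu>)"
    by (subst nn_integral_count_space_nat, rule suminf_finite) (auto simp: d_def)
  also have "\<dots> = (\<Sum>a<N. ennreal (w a / W) * (\<integral>\<^sup>+x'. ennreal (f (xs a) x') * h (a, x') \<partial>\<mu>))"
  proof (rule sum.cong[OF refl])
    fix a assume "a \<in> {..<N}"
    then have "0 \<le> w a / W" and [measurable]: "f (xs a) \<in> borel_measurable \<mu>"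
      using w_nonneg w_sum_pos xs_space f_measurable by (auto simp: W_def)
    then have "(\<integral>\<^sup>+x'. d (a, x') * h (a, x') \<partial>\<mu>)
        = (\<integral>\<^sup>+x'. ennreal (w a / W) * (ennreal (f (xs a) x') * h (a, x')) \<partial>\<mu>)"
      using \<open>a \<in> {..<N}\<close>
      by (intro nn_integral_cong) (simp add: d_def ennreal_mult' mult.assoc del: times_divide_eq_left)
    also have "\<dots> = ennreal (w a / W) * (\<integral>\<^sup>+x'. ennreal (f (xs a) x') * h (a, x') \<partial>\<mu>)"
      by (rule nn_integral_cmult) (use h in measurable)
    finally show "(\<integral>\<^sup>+x'. d (a, x') * h (a, x') \<partial>\<mu>) = \<dots>" .
  qed
  finally show ?thesis by (simp add: W_def)
qed

lemma prob_space_apf_draw: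
  assumes "\<And>x. x \<in> space \<mu> \<Longrightarrow> (\<integral>\<^sup>+x'. ennreal (f x x') \<partial>\<mu>) = 1"
  shows "prob_space (apf_draw \<mu> N xs w f)"
proof
  have "emeasure (apf_draw \<mu> N xs w f) (space (apf_draw \<mu> N xs w f)) = (\<Sum>a<N. ennreal (w a / (\<Sum>m<N. w m)))"
    using nn_integral_apf_draw[of "\<lambda>_. 1"] assms xs_space by simp
  also have "\<dots> = ennreal (\<Sum>a<N. w a / (\<Sum>m<N. w m))"
    using w_nonneg w_sum_pos by (intro sum_ennreal) auto
  also have "(\<Sum>a<N. w a / (\<Sum>m<N. w m)) = 1"
    using w_sum_pos by (simp add: sum_divide_distrib[symmetric])
  finally show "emeasure (apf_draw \<mu> N xs w f) (space (apf_draw \<mu> N xs w f)) = 1" by simp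
qed

lemma nn_integral_apf_draw_weight:
  assumes "g \<in> borel_measurable \<mu>" and g_nonneg: "\<And>x'. x' \<in> space \<mu> \<Longrightarrow> 0 \<le> g x'"
    and f_nonneg: "\<And>x x'. x \<in> space \<mu> \<Longrightarrow> x' \<in> space \<mu> \<Longrightarrow> 0 \<le> f x x'"
    and "\<And>n. n < N \<Longrightarrow> integrable \<mu> (\<lambda>x'. f (xs n) x' * g x')"
  shows "(\<integral>\<^sup>+z. ennreal (g (snd z)) \<partial>apf_draw \<mu> N xs w f)
    = ennreal (\<Sum>n<N. w n / (\<Sum>m<N. w m) * (\<integral>x'. f (xs n) x' * g x' \<partial>\<mu>))"
proof -
  let ?W = "\<Sum>m<N. w m"
  have integral_eq: "(\<integral>\<^sup>+x'. ennreal (f (xs n) x') * ennreal (g x') \<partial>\<mu>) = ennreal (\<integral>x'. f (xs n) x' * g x' \<partial>\<mu>)"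
    if "n < N" for n
  proof -
    have "(\<integral>\<^sup>+x'. ennreal (f (xs n) x') * ennreal (g x') \<partial>\<mu>) = (\<integral>\<^sup>+x'. ennreal (f (xs n) x' * g x') \<partial>\<mu>)"
      using that xs_space f_nonneg g_nonneg by (intro nn_integral_cong) (simp add: ennreal_mult)
    also have "\<dots> = ennreal (\<integral>x'. f (xs n) x' * g x' \<partial>\<mu>)"
      using that xs_space f_nonneg g_nonneg assms(4) by (intro nn_integral_eq_integral) auto
    finally show ?thesis .
  qed
  have "(\<integral>\<^sup>+z. ennreal (g (snd z)) \<partial>apf_draw \<mu> N xs w f)
      = (\<Sum>n<N. ennreal (w n / ?W) * ennreal (\<integral>x'. f (xs n) x' * g x' \<partial>\<mu>))"
    using assms(1) by (simp add: nn_integral_apf_draw integral_eq)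
  also have "\<dots> = (\<Sum>n<N. ennreal (w n / ?W * (\<integral>x'. f (xs n) x' * g x' \<partial>\<mu>)))"
    using w_nonneg w_sum_pos by (intro sum.cong refl ennreal_mult'[symmetric]) auto
  also have "\<dots> = ennreal (\<Sum>n<N. w n / ?W * (\<integral>x'. f (xs n) x' * g x' \<partial>\<mu>))"
    using w_nonneg w_sum_pos xs_space f_nonneg g_nonneg
    by (intro sum_ennreal) (auto intro!: integral_nonneg)
  finally show ?thesis .
qed

end

lemma apf_ratio_eq_mean:
  assumes "infinite {j. 0 < g (snd (\<omega> j))}" "\<And>j. 0 \<le> g (snd (\<omega> j))" "0 < N"
  shows "ennreal ((\<Sum>n<N. apf_weight g \<omega> n) / (real (apf_P g N \<omega>) - 1))
    = (\<Sum>i<apf_pos g \<omega> N. ennreal (g (snd (\<omega> i)))) / of_nat (apf_pos g \<omega> N)"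
proof -
  have "N \<le> apf_pos g \<omega> N"
    unfolding apf_pos_def by (rule le_enumerate[OF assms(1)])
  moreover have "(\<Sum>n<N. apf_weight g \<omega> n) = (\<Sum>i<apf_pos g \<omega> N. g (snd (\<omega> i)))"
    unfolding apf_weight_def apf_pos_def
    by (intro sum_enumerate[OF assms(1)]) (metis assms(2) mem_Collect_eq order_less_le)
  ultimately show ?thesis
    using assms(2,3)
    by (simp add: apf_P_def divide_ennreal[symmetric] sum_nonneg ennreal_of_nat_eq_real_of_nat)
qed

lemma measurable_apf_ratio[measurable]:
  assumes [measurable]: "(\<lambda>z. g (snd z)) \<in> borel_measurable M"
  shows "(\<lambda>\<omega>. (\<Sum>n<N. apf_weight g \<omega> n) / (real (apf_P g N \<omega>) - 1))
    \<in> borel_measurable (PiM UNIV (\<lambda>_::nat. M))"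
  unfolding apf_weight_def apf_P_def apf_pos_def by measurable

lemma nn_integral_apf_ratio:
  assumes "prob_space M" and [measurable]: "(\<lambda>z. g (snd z)) \<in> borel_measurable M"
    and g_nonneg: "\<And>z. z \<in> space M \<Longrightarrow> 0 \<le> g (snd z)"
    and "(\<integral>\<^sup>+z. ennreal (g (snd z)) \<partial>M) \<noteq> 0" and "0 < N"
  shows "(\<integral>\<^sup>+\<omega>. ennreal ((\<Sum>n<N. apf_weight g \<omega> n) / (real (apf_P g N \<omega>) - 1)) \<partial>PiM UNIV (\<lambda>_. M))
    = (\<integral>\<^sup>+z. ennreal (g (snd z)) \<partial>M)"
proof -
  interpret prob_space M by fact
  let ?\<Omega> = "PiM UNIV (\<lambda>_::nat. M)"
  have visit_pred: "Measurable.pred M (\<lambda>z. 0 < g (snd z))"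
    by measurable
  have visits: "emeasure M {z \<in> space M. 0 < g (snd z)} \<noteq> 0"
    using emeasure_Collect_pos_neq_0[OF assms(2,4)] .
  have draws_nonneg: "0 \<le> g (snd (\<omega> j))" if "\<omega> \<in> space ?\<Omega>" for \<omega> j
    using that by (intro g_nonneg) (auto simp: space_PiM)
  have "AE \<omega> in ?\<Omega>. ennreal ((\<Sum>n<N. apf_weight g \<omega> n) / (real (apf_P g N \<omega>) - 1))
      = (\<Sum>i<apf_pos g \<omega> N. ennreal (g (snd (\<omega> i)))) / of_nat (apf_pos g \<omega> N)"
    using AE_PiM_infinitely_often[OF visit_pred visits] AE_space
  proof eventually_elim
    case (elim \<omega>)
    then show ?case
      using \<open>0 < N\<close> draws_nonneg by (intro apf_ratio_eq_mean) auto
  qed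
  then have "(\<integral>\<^sup>+\<omega>. ennreal ((\<Sum>n<N. apf_weight g \<omega> n) / (real (apf_P g N \<omega>) - 1)) \<partial>?\<Omega>)
      = (\<integral>\<^sup>+\<omega>. (\<Sum>i<apf_pos g \<omega> N. ennreal (g (snd (\<omega> i)))) / of_nat (apf_pos g \<omega> N) \<partial>?\<Omega>)"
    by (rule nn_integral_cong_AE)
  also have "\<dots> = (\<integral>\<^sup>+z. ennreal (g (snd z)) \<partial>M)"
    unfolding apf_pos_def using \<open>0 < N\<close>
    by (intro nn_integral_mean_before_visit[OF visit_pred _ visits]) auto
  finally show ?thesis .
qed

lemma integral_apf_ratio:
  assumes "prob_space M" and "(\<lambda>z. g (snd z)) \<in> borel_measurable M"
    and g_nonneg: "\<And>z. z \<in> space M \<Longrightarrow> 0 \<le> g (snd z)"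
    and "(\<integral>\<^sup>+z. ennreal (g (snd z)) \<partial>M) = ennreal c" and "0 < c" and "0 < N"
  shows "(\<integral>\<omega>. (\<Sum>n<N. apf_weight g \<omega> n) / (real (apf_P g N \<omega>) - 1) \<partial>PiM UNIV (\<lambda>_. M)) = c"
proof -
  let ?\<Omega> = "PiM UNIV (\<lambda>_::nat. M)"
  have "0 \<le> g (snd (\<omega> j))" if "\<omega> \<in> space ?\<Omega>" for \<omega> j
    using that by (intro g_nonneg) (auto simp: space_PiM)
  then have "(\<integral>\<omega>. (\<Sum>n<N. apf_weight g \<omega> n) / (real (apf_P g N \<omega>) - 1) \<partial>?\<Omega>)
      = enn2real (\<integral>\<^sup>+\<omega>. ennreal ((\<Sum>n<N. apf_weight g \<omega> n) / (real (apf_P g N \<omega>) - 1)) \<partial>?\<Omega>)"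
    by (intro integral_eq_nn_integral measurable_apf_ratio assms(2) AE_I2)
      (auto simp: apf_weight_def apf_P_def intro!: divide_nonneg_nonneg sum_nonneg)
  also have "\<dots> = c"
    using nn_integral_apf_ratio[OF assms(1-3) _ assms(6)] assms(4,5) by simp
  finally show ?thesis .
qed

theorem lemma1:
  fixes \<mu> :: "'a measure" and N :: nat and xs :: "nat \<Rightarrow> 'a" and w :: "nat \<Rightarrow> real"
    and f :: "'a \<Rightarrow> 'a \<Rightarrow> real" and g :: "'a \<Rightarrow> real"
  assumes "sigma_finite_measure \<mu>"
    and "N \<ge> 1"
    and "\<And>n. n < N \<Longrightarrow> xs n \<in> space \<mu>"
    and "\<And>n. n < N \<Longrightarrow> w n \<ge> 0"
    and "(\<Sum>m<N. w m) > 0"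
    and "\<And>x. x \<in> space \<mu> \<Longrightarrow> f x \<in> borel_measurable \<mu>"
    and "\<And>x x'. x \<in> space \<mu> \<Longrightarrow> x' \<in> space \<mu> \<Longrightarrow> f x x' \<ge> 0"
    and "\<And>x. x \<in> space \<mu> \<Longrightarrow> (\<integral>\<^sup>+ x'. ennreal (f x x') \<partial>\<mu>) = 1"
    and "g \<in> borel_measurable \<mu>"
    and "\<And>x'. x' \<in> space \<mu> \<Longrightarrow> g x' \<ge> 0"
    and "\<And>n. n < N \<Longrightarrow> integrable \<mu> (\<lambda>x'. f (xs n) x' * g x')"
    and "(\<Sum>n<N. w n / (\<Sum>m<N. w m) * (\<integral>x'. f (xs n) x' * g x' \<partial>\<mu>)) > 0"
  shows "(\<integral>\<omega>. (\<Sum>n<N. apf_weight g \<omega> n) / (real (apf_P g N \<omega>) - 1) \<partial>(apf_space \<mu> N xs w f))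
         = (\<Sum>n<N. w n / (\<Sum>m<N. w m) * (\<integral>x'. f (xs n) x' * g x' \<partial>\<mu>))"
proof -
  let ?D = "apf_draw \<mu> N xs w f"
  have "prob_space ?D"
    by (rule prob_space_apf_draw) (fact assms)+
  moreover have "(\<lambda>z. g (snd z)) \<in> borel_measurable ?D"
    using assms(9) by measurable
  moreover have "(\<integral>\<^sup>+z. ennreal (g (snd z)) \<partial>?D)
      = ennreal (\<Sum>n<N. w n / (\<Sum>m<N. w m) * (\<integral>x'. f (xs n) x' * g x' \<partial>\<mu>))"
    by (rule nn_integral_apf_draw_weight[of \<mu> N xs w f g]) (fact assms)+
  ultimately show ?thesis
    unfolding apf_space_def using assms(2,10,12)
    by (intro integral_apf_ratio) (auto simp: space_apf_draw)
qed

end
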